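(* Let $\tilde{\mathbf{P}}\in\mathbb{R}^{n\times n}$ and let $\mathbf{X}\in\{0,1\}^{n\times n}$ be a binary matrix with weighted indicator matrix $\tilde{\mathbf{X}}$ such that for all $i,j\in[n]$, $\tilde{\mathbf{P}}_{ij}=\max_k\tilde{\mathbf{P}}_{ik}$ if and only if $\mathbf{X}_{ij}=1$. Then for all $\epsilon>0$ there exist $\delta>0$ and $b>0$ such that for every $\tilde{\mathbf{Q}}\in\mathbb{R}^{n\times n}$ with $\|\tilde{\mathbf{P}}-\tilde{\mathbf{Q}}\|_F<\delta$, $$\|\mathsf{softmax}(b\cdot\tilde{\mathbf{Q}})-\tilde{\mathbf{X}}\|_F<\epsilon,$$ where the softmax is applied row-wise.
   Context: For a binary vector $\mathbf{x}\in\{0,1\}^n$ with at least one nonzero entry, its weighted indicator vector is $\mathbf{x}/\sum_i x_i$. The weighted indicator matrix $\tilde{\mathbf{X}}$ of a binary matrix $\mathbf{X}$ has as $i$-th row the weighted indicator vector of the $i$-th row of $\mathbf{X}$. *)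

theory Defs
  imports "HOL-Analysis.Analysis"
begin

definition frob_norm :: "real^'n^'m \<Rightarrow> real" where
  "frob_norm A = sqrt (\<Sum>i\<in>UNIV. \<Sum>j\<in>UNIV. (A $ i $ j)^2)"

definition binary_matrix :: "real^'n^'m \<Rightarrow> bool" where
  "binary_matrix X \<longleftrightarrow> (\<forall>i j. X $ i $ j = 0 \<or> X $ i $ j = 1)"

definition weighted_indicator :: "real^'n^'m \<Rightarrow> real^'n^'m" where
  "weighted_indicator X = (\<chi> i j. X $ i $ j / (\<Sum>k\<in>UNIV. X $ i $ k))"

definition softmax_rows :: "real^'n^'m \<Rightarrow> real^'n^'m" where
  "softmax_rows Q = (\<chi> i j. exp (Q $ i $ j) / (\<Sum>k\<in>UNIV. exp (Q $ i $ k)))"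

end

theory Submission
  imports Defs
begin

text \<open>As \<open>b \<rightarrow> \<infinity>\<close>, the entries of \<open>softmax(b P)\<close> converge: after subtracting the row
  maximum from every entry, \<open>exp (b (P\<^sub>i\<^sub>j - max\<^sub>k P\<^sub>i\<^sub>k))\<close> tends to 1 on the maximising entries
  and to 0 elsewhere, so the limit is the weighted indicator matrix of the row-wise argmax,
  which is \<open>X\<close>. Fixing a large \<open>b\<close>, continuity of \<open>Q \<mapsto> softmax(b Q)\<close> at \<open>P\<close> yields \<open>\<delta>\<close>.\<close>

lemma frob_norm_eq_norm: "frob_norm (A :: real^'n^'m) = norm A"
proof -
  have "\<And>i. (norm (A $ i))\<^sup>2 = (\<Sum>j\<in>UNIV. (A $ i $ j)^2)"
    by (simp add: norm_vec_def L2_set_def sum_nonneg)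
  then show ?thesis
    by (simp add: frob_norm_def norm_vec_def L2_set_def)
qed

lemma isCont_softmax_rows: "isCont softmax_rows (Q :: real^'n^'m)"
proof -
  have "(\<Sum>k\<in>UNIV. exp (Q $ i $ k)) \<noteq> 0" for i
    using sum_pos[of UNIV "\<lambda>k. exp (Q $ i $ k)"] by auto
  then show ?thesis
    unfolding isCont_def softmax_rows_def
    by (intro tendsto_vec_lambda tendsto_divide tendsto_exp tendsto_sum tendsto_vec_nth
        tendsto_ident_at) auto
qed

lemma softmax_rows_shift: "softmax_rows (\<chi> i j. Q $ i $ j - c i) = softmax_rows Q"
  by (simp add: softmax_rows_def exp_diff flip: sum_divide_distrib)

definition argmax_indicator :: "real^'n^'m \<Rightarrow> real^'n^'m" where
  "argmax_indicator P = (\<chi> i j. if P $ i $ j = (MAX k. P $ i $ k) then 1 else 0)"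

lemma argmax_indicator_unique:
  assumes "binary_matrix X"
    and "\<forall>i j. P $ i $ j = (MAX k. P $ i $ k) \<longleftrightarrow> X $ i $ j = 1"
  shows "X = argmax_indicator P"
  using assms by (auto simp: vec_eq_iff argmax_indicator_def binary_matrix_def)

lemma row_sum_argmax_indicator_pos: "(\<Sum>k\<in>UNIV. argmax_indicator P $ i $ k) > 0"
proof -
  have "(MAX k. P $ i $ k) \<in> range (\<lambda>k. P $ i $ k)"
    by (rule Max_in) auto
  then obtain k0 where "P $ i $ k0 = (MAX k. P $ i $ k)"
    by (metis rangeE)
  then have "argmax_indicator P $ i $ k0 = 1"
    by (simp add: argmax_indicator_def)
  moreover have "argmax_indicator P $ i $ k0 \<le> (\<Sum>k\<in>UNIV. argmax_indicator P $ i $ k)"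
    by (rule member_le_sum) (auto simp: argmax_indicator_def)
  ultimately show ?thesis by linarith
qed

lemma tendsto_exp_scaled_nonpos:
  fixes a :: real
  assumes "a \<le> 0"
  shows "((\<lambda>b. exp (b * a)) \<longlongrightarrow> (if a = 0 then 1 else 0)) at_top"
proof (cases "a = 0")
  case False
  with assms have "filterlim (\<lambda>b. a * b) at_bot at_top"
    by (intro filterlim_tendsto_neg_mult_at_bot[OF tendsto_const _ filterlim_ident]) auto
  then have "((\<lambda>b. exp (a * b)) \<longlongrightarrow> 0) at_top"
    using exp_at_bot filterlim_compose by blast
  with False show ?thesis by (simp add: mult.commute)
qed simp

lemma tendsto_softmax_rows_scaled:
  fixes P :: "real^'n^'m"
  shows "((\<lambda>b. softmax_rows (b *\<^sub>R P)) \<longlongrightarrow> weighted_indicator (argmax_indicator P)) at_top"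
proof -
  define m where "m i = (MAX k. P $ i $ k)" for i
  have "softmax_rows (b *\<^sub>R P) = softmax_rows (\<chi> i j. b * (P $ i $ j - m i))" for b
    using softmax_rows_shift[of "b *\<^sub>R P" "\<lambda>i. b * m i"]
    by (simp add: right_diff_distrib)
  moreover have "((\<lambda>b. exp (b * (P $ i $ j - m i))) \<longlongrightarrow> argmax_indicator P $ i $ j) at_top"
    for i j
    using tendsto_exp_scaled_nonpos[of "P $ i $ j - m i"]
    by (simp add: m_def argmax_indicator_def)
  ultimately show ?thesis
    unfolding softmax_rows_def weighted_indicator_def
    using row_sum_argmax_indicator_pos[of P]
    by (simp, intro tendsto_vec_lambda tendsto_divide tendsto_sum) (auto simp: less_le)
qed

lemma limit_at_top_approx_near:
  fixes f :: "real \<Rightarrow> 'a::metric_space \<Rightarrow> 'b::metric_space"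
  assumes lim: "((\<lambda>b. f b x) \<longlongrightarrow> L) at_top"
    and cont: "\<And>b. isCont (f b) x"
    and "\<epsilon> > 0"
  shows "\<exists>\<delta>>0. \<exists>b>0. \<forall>y. dist y x < \<delta> \<longrightarrow> dist (f b y) L < \<epsilon>"
proof -
  have "eventually (\<lambda>b. dist (f b x) L < \<epsilon>/2 \<and> b > 0) at_top"
    using lim \<open>\<epsilon> > 0\<close> unfolding tendsto_iff
    by (intro eventually_conj eventually_gt_at_top) (meson half_gt_zero)
  then obtain b where b: "b > 0" "dist (f b x) L < \<epsilon>/2"
    by (auto simp: eventually_at_top_linorder)
  obtain \<delta> where "\<delta> > 0" and \<delta>: "\<And>y. dist y x < \<delta> \<Longrightarrow> dist (f b y) (f b x) < \<epsilon>/2"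
    using cont[of b] \<open>\<epsilon> > 0\<close> unfolding continuous_at_eps_delta by (meson half_gt_zero)
  have "dist (f b y) L < \<epsilon>" if "dist y x < \<delta>" for y
    using \<delta>[OF that] b(2) dist_triangle[of "f b y" L "f b x"] by linarith
  with \<open>\<delta> > 0\<close> b(1) show ?thesis by blast
qed

theorem lemmaF3:
  fixes P X :: "real^'n^'n"
  assumes "binary_matrix X"
    and "\<forall>i j. P $ i $ j = (MAX k. P $ i $ k) \<longleftrightarrow> X $ i $ j = 1"
  shows "\<forall>\<epsilon>>0. \<exists>\<delta>>0. \<exists>b>0. \<forall>Q :: real^'n^'n. frob_norm (P - Q) < \<delta> \<longrightarrow>
           frob_norm (softmax_rows (b *\<^sub>R Q) - weighted_indicator X) < \<epsilon>"
proof (intro allI impI)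
  fix \<epsilon> :: real
  assume "\<epsilon> > 0"
  have lim: "((\<lambda>b. softmax_rows (b *\<^sub>R P)) \<longlongrightarrow> weighted_indicator X) at_top"
    using tendsto_softmax_rows_scaled argmax_indicator_unique[OF assms] by simp
  have "isCont (\<lambda>Q. softmax_rows (b *\<^sub>R Q)) P" for b
    by (intro continuous_intros isCont_o2[OF _ isCont_softmax_rows])
  from limit_at_top_approx_near[OF lim this \<open>\<epsilon> > 0\<close>]
  show "\<exists>\<delta>>0. \<exists>b>0. \<forall>Q :: real^'n^'n. frob_norm (P - Q) < \<delta> \<longrightarrow>
           frob_norm (softmax_rows (b *\<^sub>R Q) - weighted_indicator X) < \<epsilon>"
    by (simp add: frob_norm_eq_norm dist_norm norm_minus_commute)
qed

end
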